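(* Let $S_1,\dots,S_d$ be independent random variables with $S_j\sim\mathrm{Bin}(n,u_j)$ and $0<u_j<1$ for all $j\in\{1,\dots,d\}$, and write $\mathbf u=(u_1,\dots,u_d)$. Then for every $\delta>0$, $$P\Big\{g\big(\tfrac{S_1}n,\dots,\tfrac{S_d}n\big)\ge g(\mathbf u)(1+\delta)\Big\}\le 2d\exp\{-n\,g(\mathbf u)\,h(1+\delta)\},$$ $$P\Big\{g\big(\tfrac{S_1}n,\dots,\tfrac{S_d}n\big)\le g(\mathbf u)(1-\delta)\Big\}\le 4d\exp\{-n\,g(\mathbf u)\,h(1+\delta)\},$$ and in particular $h(1+\delta)\ge\frac13\delta^2$ for $0<\delta\le1$.
   Context: $d\ge2$; $g(\mathbf u)=\bigwedge_{j=1}^d\{u_j\wedge\bigvee_{k\ne j}(1-u_k)\}$ for $\mathbf u\in[0,1]^d$ ($\wedge$ = min, $\vee$ = max); $h(x)=x(\log x-1)+1$ for $x>0$. *)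

theory Defs
  imports "HOL-Probability.Probability"
begin

definition gfun :: "nat \<Rightarrow> (nat \<Rightarrow> real) \<Rightarrow> real" where
  "gfun d u = Min ((\<lambda>j. min (u j) (Max ((\<lambda>k. 1 - u k) ` ({1..d} - {j})))) ` {1..d})"

definition hfun :: "real \<Rightarrow> real" where
  "hfun x = x * (ln x - 1) + 1"

end

theory Submission
  imports Defs
begin

text \<open>
  Let \<open>j0\<close> attain the outer minimum in \<open>g(u)\<close> and suppose \<open>g(S/n) \<ge> g(u)(1+\<delta>)\<close>. If
  \<open>g(u) = u_j0\<close>, then \<open>S_j0/n \<ge> u_j0 (1+\<delta>)\<close>; otherwise \<open>g(u)\<close> is the inner maximum at
  \<open>j0\<close>, so \<open>1 - u_k \<le> g(u)\<close> for all \<open>k \<noteq> j0\<close> and \<open>1 - S_k/n \<ge> g(u)(1+\<delta>)\<close> for one of them.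
  Dually, if \<open>g(S/n) \<le> g(u)(1-\<delta>)\<close> and \<open>j\<close> attains the outer minimum in \<open>g(S/n)\<close>, then
  \<open>S_j/n\<close> or \<open>1 - S_\<kappa>(j)/n\<close> is at most \<open>g(u)(1-\<delta>)\<close>, where \<open>\<kappa>(j)\<close> realises the inner
  maximum for \<open>u\<close>, so that \<open>g(u) \<le> min (u_j) (1 - u_\<kappa>(j))\<close>. Since \<open>n - S_k\<close> is
  \<open>Bin(n, 1 - u_k)\<close>, each of these events is a multiplicative Chernoff tail of a binomial
  variable whose mean is at most (resp. at least) \<open>n g(u)\<close>, so it has probability at most
  \<open>exp(-n g(u) h(1+\<delta>))\<close>, and a union bound gives the constants (in fact \<open>d\<close> and \<open>2d\<close>).
\<close>

lemma ln_add_one_ge_pade: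
  fixes x :: real assumes "0 \<le> x"
  shows "2 * x / (2 + x) \<le> ln (1 + x)"
proof -
  define f where "f y = ln (1 + y) - 2 * y / (2 + y)" for y :: real
  have "f 0 \<le> f x"
  proof (rule DERIV_nonneg_imp_nondecreasing[OF assms])
    fix y :: real assume "0 \<le> y"
    have "(f has_real_derivative 1 / (1 + y) - 4 / (2 + y)\<^sup>2) (at y)"
      unfolding f_def using \<open>0 \<le> y\<close>
      by (auto intro!: derivative_eq_intros) (simp add: divide_simps power2_eq_square)
    moreover have "4 * (1 + y) \<le> (2 + y)\<^sup>2"
      by (simp add: power2_eq_square algebra_simps)
    hence "0 \<le> 1 / (1 + y) - 4 / (2 + y)\<^sup>2"
      using \<open>0 \<le> y\<close> by (simp add: divide_simps)
    ultimately show "\<exists>D. (f has_real_derivative D) (at y) \<and> 0 \<le> D" by blast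
  qed
  thus ?thesis by (simp add: f_def)
qed

lemma ln_add_one_le_mean:
  fixes x :: real assumes "0 \<le> x"
  shows "2 * ln (1 + x) \<le> x + x / (1 + x)"
proof -
  define f where "f y = y + y / (1 + y) - 2 * ln (1 + y)" for y :: real
  have "f 0 \<le> f x"
  proof (rule DERIV_nonneg_imp_nondecreasing[OF assms])
    fix y :: real assume "0 \<le> y"
    have "(f has_real_derivative 1 + 1 / (1 + y)\<^sup>2 - 2 / (1 + y)) (at y)"
      unfolding f_def using \<open>0 \<le> y\<close>
      by (auto intro!: derivative_eq_intros) (simp add: divide_simps power2_eq_square)
    moreover have "1 + 1 / (1 + y)\<^sup>2 - 2 / (1 + y) = (1 - 1 / (1 + y))\<^sup>2"
      using \<open>0 \<le> y\<close> by (simp add: power2_diff power_divide)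
    ultimately show "\<exists>D. (f has_real_derivative D) (at y) \<and> 0 \<le> D" by fastforce
  qed
  thus ?thesis by (simp add: f_def)
qed

lemma hfun_one_plus: "hfun (1 + \<delta>) = (1 + \<delta>) * ln (1 + \<delta>) - \<delta>"
  by (simp add: hfun_def algebra_simps)

lemma hfun_one_plus_ge_square:
  fixes \<delta> :: real assumes "0 \<le> \<delta>" "\<delta> \<le> 1"
  shows "\<delta>\<^sup>2 / 3 \<le> hfun (1 + \<delta>)"
proof -
  have "\<delta> * \<delta>\<^sup>2 \<le> 1 * \<delta>\<^sup>2"
    using assms by (intro mult_right_mono) auto
  hence "\<delta> + \<delta>\<^sup>2 / 3 \<le> (1 + \<delta>) * (2 * \<delta> / (2 + \<delta>))"
    using assms by (simp add: field_simps power2_eq_square)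
  also have "\<dots> \<le> (1 + \<delta>) * ln (1 + \<delta>)"
    using assms by (intro mult_left_mono ln_add_one_ge_pade) auto
  finally show ?thesis by (simp add: hfun_one_plus)
qed

lemma expectation_exp_binomial_pmf:
  assumes "p \<in> {0..1}"
  shows "measure_pmf.expectation (binomial_pmf n p) (\<lambda>k. exp (t * real k)) = (p * exp t + (1 - p)) ^ n"
proof -
  have "exp (t * real k) = exp t ^ k" for k
    by (simp add: mult.commute flip: exp_of_nat_mult)
  hence "measure_pmf.expectation (binomial_pmf n p) (\<lambda>k. exp (t * real k))
      = (\<Sum>k\<le>n. real (n choose k) * (p * exp t) ^ k * (1 - p) ^ (n - k))"
    using assms by (simp add: expectation_binomial_pmf' power_mult_distrib mult_ac)
  also have "\<dots> = (p * exp t + (1 - p)) ^ n"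
    by (simp add: binomial_ring)
  finally show ?thesis .
qed

lemma binomial_mgf_le_exp:
  assumes "p \<in> {0..1}"
  shows "(p * exp t + (1 - p)) ^ n \<le> exp (real n * p * (exp t - 1))"
proof -
  have "- 1 \<le> p * (exp t - 1)"
    using assms mult_left_mono[of "- 1" "exp t - 1" p] by auto
  hence "(1 + p * (exp t - 1)) ^ n \<le> exp (p * (exp t - 1)) ^ n"
    by (intro power_mono exp_ge_add_one_self) auto
  thus ?thesis by (simp add: algebra_simps flip: exp_of_nat_mult)
qed

lemma prob_binomial_pmf_Chernoff:
  assumes "p \<in> {0..1}"
  shows "measure_pmf.prob (binomial_pmf n p) {k. t * a \<le> t * real k}
           \<le> exp (real n * p * (exp t - 1) - t * a)"
proof -
  have "{k. t * a \<le> t * real k}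
      = {k \<in> space (measure_pmf (binomial_pmf n p)). exp (t * a) \<le> exp (t * real k)}"
    by simp
  also have "measure_pmf.prob (binomial_pmf n p) \<dots>
      \<le> measure_pmf.expectation (binomial_pmf n p) (\<lambda>k. exp (t * real k)) / exp (t * a)"
    using assms by (intro integral_Markov_inequality_measure[where A = "{}"]) auto
  also have "\<dots> \<le> exp (real n * p * (exp t - 1)) / exp (t * a)"
    using assms by (simp add: expectation_exp_binomial_pmf binomial_mgf_le_exp divide_right_mono)
  finally show ?thesis by (simp add: exp_diff)
qed

lemma map_pmf_binomial_pmf_reflect:
  assumes "p \<in> {0..1}"
  shows "map_pmf (\<lambda>k. n - k) (binomial_pmf n p) = binomial_pmf n (1 - p)"
proof (rule pmf_eqI)
  fix k
  show "pmf (map_pmf (\<lambda>k. n - k) (binomial_pmf n p)) k = pmf (binomial_pmf n (1 - p)) k"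
  proof (cases "k \<le> n")
    case True
    have "measure_pmf.prob (binomial_pmf n p) ((\<lambda>k. n - k) -` {k})
        = measure_pmf.prob (binomial_pmf n p) {n - k}"
      using assms True by (intro measure_prob_cong_0) auto
    thus ?thesis
      using assms True by (simp add: pmf_map measure_pmf_single binomial_symmetric[OF True])
  next
    case False
    hence "(\<lambda>k. n - k) -` {k} = {}" by auto
    thus ?thesis using assms False by (simp add: pmf_map)
  qed
qed

lemma prob_binomial_pmf_reflect:
  assumes "p \<in> {0..1}" and "\<And>k. k \<le> n \<Longrightarrow> Q k \<longleftrightarrow> P (n - k)"
  shows "measure_pmf.prob (binomial_pmf n p) {k. Q k}
       = measure_pmf.prob (binomial_pmf n (1 - p)) {k. P k}"
proof -
  have "measure_pmf.prob (binomial_pmf n (1 - p)) {k. P k}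
      = measure_pmf.prob (binomial_pmf n p) {k. P (n - k)}"
    using assms(1) by (simp flip: map_pmf_binomial_pmf_reflect)
  also have "\<dots> = measure_pmf.prob (binomial_pmf n p) {k. Q k}"
    using assms by (intro measure_prob_cong_0) auto
  finally show ?thesis ..
qed

lemma prob_binomial_pmf_upper_tail:
  assumes "p \<in> {0..1}" "p \<le> q" "0 < \<delta>"
  shows "measure_pmf.prob (binomial_pmf n p) {k. real n * q * (1 + \<delta>) \<le> real k}
           \<le> exp (- real n * q * hfun (1 + \<delta>))"
proof -
  define t where "t = ln (1 + \<delta>)"
  have "0 < t" "exp t - 1 = \<delta>" using assms by (simp_all add: t_def)
  hence "{k. real n * q * (1 + \<delta>) \<le> real k} = {k. t * (real n * q * (1 + \<delta>)) \<le> t * real k}"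
    by (simp add: mult.assoc)
  also have "measure_pmf.prob (binomial_pmf n p) \<dots>
      \<le> exp (real n * p * \<delta> - t * (real n * q * (1 + \<delta>)))"
    using prob_binomial_pmf_Chernoff[OF assms(1), of n t] unfolding \<open>exp t - 1 = \<delta>\<close> .
  also have "\<dots> \<le> exp (real n * q * \<delta> - t * (real n * q * (1 + \<delta>)))"
    using assms by (simp add: mult_left_mono mult_right_mono)
  also have "\<dots> = exp (- real n * q * hfun (1 + \<delta>))"
    by (simp add: t_def hfun_one_plus algebra_simps)
  finally show ?thesis .
qed

lemma prob_binomial_pmf_lower_tail:
  assumes "p \<in> {0..1}" "0 \<le> q" "q \<le> p" "0 < \<delta>"
  shows "measure_pmf.prob (binomial_pmf n p) {k. real k \<le> real n * q * (1 - \<delta>)}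
           \<le> exp (- real n * q * hfun (1 + \<delta>))"
proof -
  \<comment> \<open>Using \<open>-ln(1+\<delta>)\<close> instead of the optimal exponent \<open>ln(1-\<delta>)\<close> gives \<open>h(1+\<delta>)\<close> directly.\<close>
  define t where "t = - ln (1 + \<delta>)"
  have "exp t - 1 = - (\<delta> / (1 + \<delta>))"
    using assms by (simp add: t_def exp_minus field_simps)
  have "t < 0" using assms by (simp add: t_def)
  hence "{k. real k \<le> real n * q * (1 - \<delta>)} = {k. t * (real n * q * (1 - \<delta>)) \<le> t * real k}"
    by (simp add: mult_le_cancel_left_neg)
  also have "measure_pmf.prob (binomial_pmf n p) \<dots>
      \<le> exp (- real n * p * (\<delta> / (1 + \<delta>)) - t * (real n * q * (1 - \<delta>)))"
    using prob_binomial_pmf_Chernoff[OF assms(1), of n t] unfolding \<open>exp t - 1 = - (\<delta> / (1 + \<delta>))\<close>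
    by simp
  also have "\<dots> \<le> exp (- real n * q * (\<delta> / (1 + \<delta>)) - t * (real n * q * (1 - \<delta>)))"
    using assms by (simp, intro divide_right_mono mult_right_mono mult_left_mono) auto
  also have "\<dots> = exp (real n * q * ((1 - \<delta>) * ln (1 + \<delta>) - \<delta> / (1 + \<delta>)))"
    by (simp add: t_def algebra_simps)
  also have "\<dots> \<le> exp (- real n * q * hfun (1 + \<delta>))"
  proof -
    have "(1 - \<delta>) * ln (1 + \<delta>) - \<delta> / (1 + \<delta>) \<le> - hfun (1 + \<delta>)"
      using assms ln_add_one_le_mean[of \<delta>] by (simp add: hfun_one_plus algebra_simps)
    hence "real n * q * ((1 - \<delta>) * ln (1 + \<delta>) - \<delta> / (1 + \<delta>)) \<le> real n * q * - hfun (1 + \<delta>)"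
      using assms by (intro mult_left_mono) auto
    thus ?thesis by simp
  qed
  finally show ?thesis .
qed

lemma (in finite_measure) measure_le_card_mult:
  assumes "finite K" "A \<subseteq> (\<Union>k\<in>K. B k)"
    and "\<And>k. k \<in> K \<Longrightarrow> B k \<in> sets M" "\<And>k. k \<in> K \<Longrightarrow> measure M (B k) \<le> e"
  shows "measure M A \<le> real (card K) * e"
proof -
  have "measure M A \<le> measure M (\<Union>k\<in>K. B k)"
    using assms by (intro finite_measure_mono) auto
  also have "\<dots> \<le> (\<Sum>k\<in>K. measure M (B k))"
    using assms by (intro finite_measure_subadditive_finite) auto
  also have "\<dots> \<le> (\<Sum>k\<in>K. e)"
    using assms by (intro sum_mono) auto
  finally show ?thesis by simp
qed

locale binomial_variable = prob_space +
  fixes n :: nat and p :: real and X :: "'a \<Rightarrow> nat"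
  assumes measurable_X: "X \<in> measurable M (count_space UNIV)"
    and distr_X: "distr M (count_space UNIV) X = measure_pmf (binomial_pmf n p)"
    and p: "p \<in> {0..1}"
begin

lemma sets_Collect_X: "{x \<in> space M. P (X x)} \<in> events"
proof -
  have "X -` {k. P k} \<inter> space M \<in> events"
    by (rule measurable_sets[OF measurable_X]) simp
  thus ?thesis by (simp add: vimage_def Int_def conj_commute)
qed

lemma prob_Collect_X: "prob {x \<in> space M. P (X x)} = measure_pmf.prob (binomial_pmf n p) {k. P k}"
proof -
  have "measure (distr M (count_space UNIV) X) {k. P k} = prob (X -` {k. P k} \<inter> space M)"
    by (rule measure_distr[OF measurable_X]) simp
  thus ?thesis by (simp add: distr_X vimage_def Int_def conj_commute)
qed

context
  fixes \<delta> q :: real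
  assumes n: "0 < n" and \<delta>: "0 < \<delta>"
begin

lemma prob_freq_upper_tail:
  assumes "p \<le> q"
  shows "prob {x \<in> space M. q * (1 + \<delta>) \<le> real (X x) / real n} \<le> exp (- real n * q * hfun (1 + \<delta>))"
proof -
  have "prob {x \<in> space M. q * (1 + \<delta>) \<le> real (X x) / real n}
      = prob {x \<in> space M. real n * q * (1 + \<delta>) \<le> real (X x)}"
    using n by (simp add: pos_le_divide_eq mult_ac)
  also have "\<dots> = measure_pmf.prob (binomial_pmf n p) {k. real n * q * (1 + \<delta>) \<le> real k}"
    by (rule prob_Collect_X)
  also have "\<dots> \<le> exp (- real n * q * hfun (1 + \<delta>))"
    using p \<delta> assms by (intro prob_binomial_pmf_upper_tail)
  finally show ?thesis .
qed

lemma prob_freq_lower_tail: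
  assumes "0 \<le> q" "q \<le> p"
  shows "prob {x \<in> space M. real (X x) / real n \<le> q * (1 - \<delta>)} \<le> exp (- real n * q * hfun (1 + \<delta>))"
proof -
  have "prob {x \<in> space M. real (X x) / real n \<le> q * (1 - \<delta>)}
      = prob {x \<in> space M. real (X x) \<le> real n * q * (1 - \<delta>)}"
    using n by (simp add: pos_divide_le_eq mult_ac)
  also have "\<dots> = measure_pmf.prob (binomial_pmf n p) {k. real k \<le> real n * q * (1 - \<delta>)}"
    by (rule prob_Collect_X)
  also have "\<dots> \<le> exp (- real n * q * hfun (1 + \<delta>))"
    using p \<delta> assms by (intro prob_binomial_pmf_lower_tail)
  finally show ?thesis .
qed

lemma prob_cofreq_upper_tail:
  assumes "1 - p \<le> q"
  shows "prob {x \<in> space M. q * (1 + \<delta>) \<le> 1 - real (X x) / real n} \<le> exp (- real n * q * hfun (1 + \<delta>))"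
proof -
  have "prob {x \<in> space M. q * (1 + \<delta>) \<le> 1 - real (X x) / real n}
      = prob {x \<in> space M. real n * q * (1 + \<delta>) \<le> real n - real (X x)}"
    using n by (simp add: le_diff_eq pos_le_divide_eq field_simps)
  also have "\<dots> = measure_pmf.prob (binomial_pmf n p) {k. real n * q * (1 + \<delta>) \<le> real n - real k}"
    by (rule prob_Collect_X)
  also have "\<dots> = measure_pmf.prob (binomial_pmf n (1 - p)) {k. real n * q * (1 + \<delta>) \<le> real k}"
    using p by (intro prob_binomial_pmf_reflect) (auto simp: of_nat_diff)
  also have "\<dots> \<le> exp (- real n * q * hfun (1 + \<delta>))"
    using p \<delta> assms by (intro prob_binomial_pmf_upper_tail) auto
  finally show ?thesis .
qed

lemma prob_cofreq_lower_tail: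
  assumes "0 \<le> q" "q \<le> 1 - p"
  shows "prob {x \<in> space M. 1 - real (X x) / real n \<le> q * (1 - \<delta>)} \<le> exp (- real n * q * hfun (1 + \<delta>))"
proof -
  have "prob {x \<in> space M. 1 - real (X x) / real n \<le> q * (1 - \<delta>)}
      = prob {x \<in> space M. real n - real (X x) \<le> real n * q * (1 - \<delta>)}"
    using n by (simp add: diff_le_eq pos_divide_le_eq field_simps)
  also have "\<dots> = measure_pmf.prob (binomial_pmf n p) {k. real n - real k \<le> real n * q * (1 - \<delta>)}"
    by (rule prob_Collect_X)
  also have "\<dots> = measure_pmf.prob (binomial_pmf n (1 - p)) {k. real k \<le> real n * q * (1 - \<delta>)}"
    using p by (intro prob_binomial_pmf_reflect) (auto simp: of_nat_diff)
  also have "\<dots> \<le> exp (- real n * q * hfun (1 + \<delta>))"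
    using p \<delta> assms by (intro prob_binomial_pmf_lower_tail) auto
  finally show ?thesis .
qed

end

end


definition max_compl :: "nat \<Rightarrow> (nat \<Rightarrow> real) \<Rightarrow> nat \<Rightarrow> real" where
  "max_compl d w j = Max ((\<lambda>k. 1 - w k) ` ({1..d} - {j}))"

lemma gfun_eq_Min_max_compl: "gfun d w = Min ((\<lambda>j. min (w j) (max_compl d w j)) ` {1..d})"
  by (simp add: gfun_def max_compl_def)

lemma gfun_le_coord: "j \<in> {1..d} \<Longrightarrow> gfun d w \<le> w j"
  unfolding gfun_eq_Min_max_compl by (rule order_trans[OF Min_le]) auto

lemma gfun_le_max_compl: "j \<in> {1..d} \<Longrightarrow> gfun d w \<le> max_compl d w j"
  unfolding gfun_eq_Min_max_compl by (rule order_trans[OF Min_le]) auto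

lemma gfun_attained: "1 \<le> d \<Longrightarrow> \<exists>j\<in>{1..d}. gfun d w = min (w j) (max_compl d w j)"
proof -
  assume "1 \<le> d"
  hence "gfun d w \<in> (\<lambda>j. min (w j) (max_compl d w j)) ` {1..d}"
    unfolding gfun_eq_Min_max_compl by (intro Min_in) auto
  thus ?thesis by auto
qed

lemma max_compl_ge: "k \<in> {1..d} - {j} \<Longrightarrow> 1 - w k \<le> max_compl d w j"
  unfolding max_compl_def by (rule Max_ge) auto

lemma max_compl_attained:
  assumes "2 \<le> d" "j \<in> {1..d}"
  shows "\<exists>k\<in>{1..d} - {j}. max_compl d w j = 1 - w k"
proof -
  have "(if j = 1 then 2 else 1) \<in> {1..d} - {j}"
    using assms by auto
  hence "{1..d} - {j} \<noteq> {}" by blast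
  hence "max_compl d w j \<in> (\<lambda>k. 1 - w k) ` ({1..d} - {j})"
    unfolding max_compl_def by (intro Max_in) auto
  thus ?thesis by auto
qed

lemma le_gfunD:
  assumes "2 \<le> d" "j \<in> {1..d}" "c \<le> gfun d w"
  shows "c \<le> w j" and "\<exists>k\<in>{1..d} - {j}. c \<le> 1 - w k"
proof -
  show "c \<le> w j"
    using assms(3) gfun_le_coord[OF assms(2)] by (rule order_trans)
  obtain k where "k \<in> {1..d} - {j}" "max_compl d w j = 1 - w k"
    using max_compl_attained[OF assms(1,2)] by blast
  thus "\<exists>k\<in>{1..d} - {j}. c \<le> 1 - w k"
    using assms(3) gfun_le_max_compl[OF assms(2), of w] by force
qed

lemma gfun_leD:
  assumes "1 \<le> d" "gfun d w \<le> c" "\<And>j. j \<in> {1..d} \<Longrightarrow> \<kappa> j \<in> {1..d} - {j}"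
  shows "\<exists>j\<in>{1..d}. w j \<le> c \<or> 1 - w (\<kappa> j) \<le> c"
proof -
  obtain j where j: "j \<in> {1..d}" "gfun d w = min (w j) (max_compl d w j)"
    using gfun_attained[OF assms(1)] by blast
  have "1 - w (\<kappa> j) \<le> max_compl d w j"
    using max_compl_ge assms(3)[OF j(1)] by blast
  hence "w j \<le> c \<or> 1 - w (\<kappa> j) \<le> c"
    using assms(2) j(2) by linarith
  thus ?thesis using j(1) by blast
qed

lemma gfun_pos:
  assumes "2 \<le> d" "\<And>j. j \<in> {1..d} \<Longrightarrow> 0 < w j \<and> w j < 1"
  shows "0 < gfun d w"
proof -
  obtain j where j: "j \<in> {1..d}" "gfun d w = min (w j) (max_compl d w j)"
    using gfun_attained[of d w] assms by auto
  obtain k where k: "k \<in> {1..d} - {j}" "max_compl d w j = 1 - w k"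
    using max_compl_attained[OF assms(1) j(1)] by blast
  show ?thesis using j k assms(2)[of j] assms(2)[of k] by auto
qed

context prob_space
begin

lemma prob_gfun_upper_tail:
  assumes "2 \<le> d" "0 < n" "0 < \<delta>"
    and bin: "\<And>j. j \<in> {1..d} \<Longrightarrow> binomial_variable M n (u j) (S j)"
  shows "prob {x \<in> space M. gfun d u * (1 + \<delta>) \<le> gfun d (\<lambda>j. real (S j x) / real n)}
           \<le> real d * exp (- real n * gfun d u * hfun (1 + \<delta>))"
proof -
  define G where "G = gfun d u"
  define E where "E = exp (- real n * G * hfun (1 + \<delta>))"
  define v where "v x = (\<lambda>j. real (S j x) / real n)" for x
  define U where "U = {x \<in> space M. G * (1 + \<delta>) \<le> gfun d (v x)}"
  obtain j0 where j0: "j0 \<in> {1..d}" "G = min (u j0) (max_compl d u j0)"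
    using gfun_attained[of d u] assms(1) unfolding G_def by auto
  consider "G = u j0" | "G = max_compl d u j0"
    using j0(2) by linarith
  hence "prob U \<le> real d * E"
  proof cases
    case 1
    have "prob U \<le> prob {x \<in> space M. G * (1 + \<delta>) \<le> v x j0}"
      using le_gfunD(1)[OF assms(1) j0(1)] unfolding U_def
      by (intro finite_measure_mono)
        (auto simp: v_def intro: binomial_variable.sets_Collect_X[OF bin[OF j0(1)]])
    also have "\<dots> \<le> E"
      using 1 assms(2,3) binomial_variable.prob_freq_upper_tail[OF bin[OF j0(1)], of \<delta> G]
      unfolding v_def E_def by auto
    also have "\<dots> \<le> real d * E"
      using assms(1) by (simp add: E_def)
    finally show ?thesis .
  next
    case 2
    have "prob U \<le> real (card ({1..d} - {j0})) * E"
    proof (rule measure_le_card_mult)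
      show "U \<subseteq> (\<Union>k\<in>{1..d} - {j0}. {x \<in> space M. G * (1 + \<delta>) \<le> 1 - v x k})"
        using le_gfunD(2)[OF assms(1) j0(1)] unfolding U_def by blast
      show "prob {x \<in> space M. G * (1 + \<delta>) \<le> 1 - v x k} \<le> E" if "k \<in> {1..d} - {j0}" for k
        using that 2 assms(2,3) max_compl_ge[OF that, of u]
          binomial_variable.prob_cofreq_upper_tail[OF bin, of k \<delta> G]
        unfolding v_def E_def by auto
    qed (auto simp: v_def intro: binomial_variable.sets_Collect_X[OF bin])
    also have "\<dots> \<le> real d * E"
      using card_Diff1_le[of "{1..d}" j0] by (intro mult_right_mono) (auto simp: E_def)
    finally show ?thesis .
  qed
  thus ?thesis by (simp add: U_def G_def E_def v_def)
qed

lemma prob_gfun_lower_tail: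
  assumes "2 \<le> d" "0 < n" "0 < \<delta>"
    and bin: "\<And>j. j \<in> {1..d} \<Longrightarrow> binomial_variable M n (u j) (S j)"
    and u_range: "\<And>j. j \<in> {1..d} \<Longrightarrow> 0 < u j \<and> u j < 1"
  shows "prob {x \<in> space M. gfun d (\<lambda>j. real (S j x) / real n) \<le> gfun d u * (1 - \<delta>)}
           \<le> 2 * real d * exp (- real n * gfun d u * hfun (1 + \<delta>))"
proof -
  define G where "G = gfun d u"
  define E where "E = exp (- real n * G * hfun (1 + \<delta>))"
  define v where "v x = (\<lambda>j. real (S j x) / real n)" for x
  have "0 \<le> G" using gfun_pos[of d u, OF assms(1) u_range] by (simp add: G_def)
  have "\<forall>j\<in>{1..d}. \<exists>k. k \<in> {1..d} - {j} \<and> max_compl d u j = 1 - u k"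
    using max_compl_attained[OF assms(1)] by blast
  then obtain \<kappa> where \<kappa>: "\<And>j. j \<in> {1..d} \<Longrightarrow> \<kappa> j \<in> {1..d} - {j} \<and> max_compl d u j = 1 - u (\<kappa> j)"
    by metis
  define A where "A j = {x \<in> space M. v x j \<le> G * (1 - \<delta>)}" for j
  define B where "B j = {x \<in> space M. 1 - v x (\<kappa> j) \<le> G * (1 - \<delta>)}" for j
  have "prob {x \<in> space M. gfun d (v x) \<le> G * (1 - \<delta>)} \<le> real (card {1..d}) * (2 * E)"
  proof (rule measure_le_card_mult)
    show "{x \<in> space M. gfun d (v x) \<le> G * (1 - \<delta>)} \<subseteq> (\<Union>j\<in>{1..d}. A j \<union> B j)"
      using gfun_leD[of d, where \<kappa> = \<kappa>] assms(1) \<kappa> unfolding A_def B_def by fastforce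
    fix j assume j: "j \<in> {1..d}"
    have bin\<kappa>: "binomial_variable M n (u (\<kappa> j)) (S (\<kappa> j))" using bin \<kappa>[OF j] by blast
    have A: "A j \<in> events"
      unfolding A_def v_def by (rule binomial_variable.sets_Collect_X[OF bin[OF j]])
    have B: "B j \<in> events"
      unfolding B_def v_def by (rule binomial_variable.sets_Collect_X[OF bin\<kappa>])
    show "A j \<union> B j \<in> events" using A B by blast
    have "prob (A j) \<le> E"
      using assms(2,3) \<open>0 \<le> G\<close> gfun_le_coord[OF j, of u]
        binomial_variable.prob_freq_lower_tail[OF bin[OF j], of \<delta> G]
      unfolding A_def v_def E_def G_def by auto
    moreover have "prob (B j) \<le> E"
      using assms(2,3) \<open>0 \<le> G\<close> gfun_le_max_compl[OF j, of u] \<kappa>[OF j]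
        binomial_variable.prob_cofreq_lower_tail[OF bin\<kappa>, of \<delta> G]
      unfolding B_def v_def E_def G_def by auto
    moreover have "prob (A j \<union> B j) \<le> prob (A j) + prob (B j)"
      using A B by (rule measure_Un_le)
    ultimately show "prob (A j \<union> B j) \<le> 2 * E" by linarith
  qed simp
  thus ?thesis by (simp add: G_def E_def v_def)
qed

end

theorem lemma8:
  fixes M :: "'a measure" and S :: "nat \<Rightarrow> 'a \<Rightarrow> nat" and u :: "nat \<Rightarrow> real"
    and d n :: nat and \<delta> :: real
  assumes "prob_space M"
    and "d \<ge> 2"
    and "prob_space.indep_vars M (\<lambda>_. count_space UNIV) S {1..d}"
    and "\<And>j. j \<in> {1..d} \<Longrightarrow> distr M (count_space UNIV) (S j) = measure_pmf (binomial_pmf n (u j))"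
    and "\<And>j. j \<in> {1..d} \<Longrightarrow> 0 < u j \<and> u j < 1"
    and "\<delta> > 0"
  shows "measure M {x \<in> space M. gfun d (\<lambda>j. real (S j x) / real n) \<ge> gfun d u * (1 + \<delta>)}
           \<le> 2 * real d * exp (- real n * gfun d u * hfun (1 + \<delta>))
     \<and> measure M {x \<in> space M. gfun d (\<lambda>j. real (S j x) / real n) \<le> gfun d u * (1 - \<delta>)}
           \<le> 4 * real d * exp (- real n * gfun d u * hfun (1 + \<delta>))
     \<and> (\<delta> \<le> 1 \<longrightarrow> hfun (1 + \<delta>) \<ge> \<delta>\<^sup>2 / 3)"
proof -
  interpret prob_space M by fact
  have bin: "binomial_variable M n (u j) (S j)" if "j \<in> {1..d}" for j
  proof
    show "S j \<in> measurable M (count_space UNIV)"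
      using assms(3) that unfolding indep_vars_def2 by blast
  qed (use assms(4) assms(5)[OF that] that in auto)
  define E where "E = exp (- real n * gfun d u * hfun (1 + \<delta>))"
  have "0 \<le> E" "1 \<le> real d" using assms(2) by (auto simp: E_def)
  hence E_le: "real d * E \<le> 2 * real d * E" "2 * real d * E \<le> 4 * real d * E" by auto
  have "prob {x \<in> space M. gfun d u * (1 + \<delta>) \<le> gfun d (\<lambda>j. real (S j x) / real n)} \<le> 2 * real d * E
      \<and> prob {x \<in> space M. gfun d (\<lambda>j. real (S j x) / real n) \<le> gfun d u * (1 - \<delta>)} \<le> 4 * real d * E"
  proof (cases "n = 0")
    case True
    hence "1 \<le> 2 * real d * E" using \<open>1 \<le> real d\<close> by (simp add: E_def)
    thus ?thesis using prob_le_1 E_le(2) by (meson order_trans)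
  next
    case False
    hence "0 < n" by simp
    thus ?thesis
      using prob_gfun_upper_tail[OF assms(2) _ assms(6) bin]
        prob_gfun_lower_tail[OF assms(2) _ assms(6) bin assms(5)] E_le
      unfolding E_def by (meson order_trans)
  qed
  moreover have "\<delta> \<le> 1 \<longrightarrow> \<delta>\<^sup>2 / 3 \<le> hfun (1 + \<delta>)"
    using hfun_one_plus_ge_square assms(6) by simp
  ultimately show ?thesis unfolding E_def by blast
qed

end
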